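(* Let $H$ be a real Hilbert space, $\mathcal{I}$ a finite index set, $J,g_i:H\to\mathbb{R}$ ($i\in\mathcal{I}$) $\mathcal{C}^1$ functions, $\Omega=\{u\in H: g_i(u)\le 0\ \forall i\in\mathcal{I}\}$, and assume that for every $u\in\Omega$ with $I_A(u)\ne\emptyset$ the vectors $\{g_i'(u): i\in I_A(u)\}$ are linearly independent. Let $u\in\Omega$ and let $d\in H$ satisfy $\langle d, g_i'(u)\rangle=0$ for all $i\in I_W(u)$. Write the orthogonal decomposition $-J'(u)=d(u)+w$ with $d(u)\in\operatorname{span}\{d\}$ and $w\in d^\perp=\{v\in H:\langle v,d\rangle=0\}$. Then $$\langle J'(u), d_W(u)\rangle\le\langle J'(u), d(u)\rangle\le 0\quad\text{and}\quad \|d(u)\|\le\|d_W(u)\|,$$ where equality holds in the first inequality, or in the third inequality $\|d(u)\|\le\|d_W(u)\|$, if and only if $d(u)=d_W(u)$, and equality holds in the second inequality if and only if $d(u)=0$.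
   Context: $J'(u)$, $g_i'(u)$ denote gradients in $H$; $\mathbb{P}_C$ is the metric projection onto a closed convex set $C$. For $u\in\Omega$: $I_A(u)=\{i\in\mathcal{I}: g_i(u)=0\}$; $C_A(u)=\{\sum_{i\in I_A(u)}a_ig_i'(u): a_i\ge0\}$ ($=\{0\}$ if empty); $d_A(u)=-J'(u)-\mathbb{P}_{C_A(u)}(-J'(u))$; $I_W(u)=\{i\in I_A(u): \langle g_i'(u), d_A(u)\rangle=0\}$; $C_W(u)=\{\sum_{i\in I_W(u)}a_ig_i'(u): a_i\ge 0\}$ ($=\{0\}$ if empty); $d_W(u)=-J'(u)-\mathbb{P}_{C_W(u)}(-J'(u))$. *)

theory Defs
  imports "HOL-Analysis.Analysis"
begin

text \<open>Metric projection onto a set C (meaningful for closed convex C in a Hilbert space).\<close>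
definition metric_proj :: "'a::real_inner set \<Rightarrow> 'a \<Rightarrow> 'a" where
  "metric_proj C x = (SOME p. p \<in> C \<and> (\<forall>c\<in>C. dist x p \<le> dist x c))"

definition gen_cone :: "'i set \<Rightarrow> ('i \<Rightarrow> 'a::real_vector) \<Rightarrow> 'a set" where
  "gen_cone K v = {(\<Sum>i\<in>K. a i *\<^sub>R v i) | a. \<forall>i\<in>K. a i \<ge> 0}"

definition feas :: "'i set \<Rightarrow> ('i \<Rightarrow> 'a \<Rightarrow> real) \<Rightarrow> 'a set" where
  "feas I g = {u. \<forall>i\<in>I. g i u \<le> 0}"

definition IA :: "'i set \<Rightarrow> ('i \<Rightarrow> 'a \<Rightarrow> real) \<Rightarrow> 'a \<Rightarrow> 'i set" where
  "IA I g u = {i\<in>I. g i u = 0}"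

definition dA :: "'i set \<Rightarrow> ('i \<Rightarrow> 'a \<Rightarrow> real) \<Rightarrow> ('i \<Rightarrow> 'a \<Rightarrow> 'a::real_inner)
    \<Rightarrow> ('a \<Rightarrow> 'a) \<Rightarrow> 'a \<Rightarrow> 'a" where
  "dA I g g' J' u = - J' u - metric_proj (gen_cone (IA I g u) (\<lambda>i. g' i u)) (- J' u)"

definition IW :: "'i set \<Rightarrow> ('i \<Rightarrow> 'a \<Rightarrow> real) \<Rightarrow> ('i \<Rightarrow> 'a \<Rightarrow> 'a::real_inner)
    \<Rightarrow> ('a \<Rightarrow> 'a) \<Rightarrow> 'a \<Rightarrow> 'i set" where
  "IW I g g' J' u = {i \<in> IA I g u. inner (g' i u) (dA I g g' J' u) = 0}"

definition dW :: "'i set \<Rightarrow> ('i \<Rightarrow> 'a \<Rightarrow> real) \<Rightarrow> ('i \<Rightarrow> 'a \<Rightarrow> 'a::real_inner)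
    \<Rightarrow> ('a \<Rightarrow> 'a) \<Rightarrow> 'a \<Rightarrow> 'a" where
  "dW I g g' J' u = - J' u - metric_proj (gen_cone (IW I g g' J' u) (\<lambda>i. g' i u)) (- J' u)"

end

theory Submission
  imports Defs
begin

text \<open>
  Let p be the metric projection of -J'(u) onto the cone C_W(u), so that d_W(u) = -J'(u) - p.
  Since C_W(u) is a cone, the nearest point p satisfies <-J'(u) - p, p> = 0, hence
  <J'(u), d_W(u)> = -|d_W(u)|^2; likewise d(u) is the orthogonal projection of -J'(u) onto
  span {d}, so <J'(u), d(u)> = -|d(u)|^2. As d is orthogonal to all g_i'(u) with i in I_W(u),
  it is orthogonal to p, so d(u) is also the orthogonal projection of d_W(u) onto span {d}, and
  Pythagoras gives |d_W(u)|^2 = |d(u)|^2 + |d_W(u) - d(u)|^2, from which every claim follows.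

  The projection exists because linear independence of the generators bounds the coefficients
  of a cone element by its norm, which confines the minimisation to a compact box of
  coefficients.
\<close>

lemma compact_PiE_intervals:
  "compact (PiE UNIV (\<lambda>i. if i \<in> K then {a..b} else {0::real}))"
proof -
  have "compactin (product_topology (\<lambda>i. euclidean) UNIV) (PiE UNIV (\<lambda>i. if i \<in> K then {a..b} else {0::real}))"
    by (subst compactin_PiE) auto
  then show ?thesis by (simp add: euclidean_product_topology)
qed

lemma independent_image_sum_eq_0:
  fixes a :: "'i \<Rightarrow> 'a::real_vector"
  assumes "finite K" "inj_on a K" "independent (a ` K)"
    and "(\<Sum>i\<in>K. t i *\<^sub>R a i) = 0" "i \<in> K"
  shows "t i = 0"
proof -
  define c where "c = t \<circ> the_inv_into K a"
  have "(\<Sum>x\<in>a ` K. c x *\<^sub>R x) = (\<Sum>i\<in>K. t i *\<^sub>R a i)"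
    using assms(2) by (simp add: sum.reindex c_def the_inv_into_f_f)
  then have "c (a i) = 0"
    using independentD[OF assms(3), of "a ` K" c "a i"] assms by simp
  then show ?thesis
    using assms(2,5) by (simp add: c_def the_inv_into_f_f)
qed

lemma independent_sum_coeffs_bound:
  fixes a :: "'i \<Rightarrow> 'a::real_normed_vector"
  assumes finK: "finite K" and "inj_on a K" "independent (a ` K)"
  obtains m where "m > 0" "\<And>t. m * (\<Sum>i\<in>K. \<bar>t i\<bar>) \<le> norm (\<Sum>i\<in>K. t i *\<^sub>R a i)"
proof (cases "K = {}")
  case True
  then show ?thesis using that[of 1] by simp
next
  case False
  then obtain j where "j \<in> K" by auto
  define S where "S = PiE UNIV (\<lambda>i. if i \<in> K then {-1..1} else {0::real}) \<inter> {t. (\<Sum>i\<in>K. \<bar>t i\<bar>) = 1}"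
  have "closed {t::'i \<Rightarrow> real. (\<Sum>i\<in>K. \<bar>t i\<bar>) = 1}"
    by (intro closed_Collect_eq continuous_intros continuous_on_product_coordinates)
  then have compact: "compact S"
    unfolding S_def by (intro compact_Int_closed compact_PiE_intervals)
  have "(\<lambda>i. if i = j then 1 else 0) \<in> S"
    unfolding S_def using \<open>j \<in> K\<close> finK by auto
  then have nonempty: "S \<noteq> {}" by auto
  have cont: "continuous_on S (\<lambda>t. norm (\<Sum>i\<in>K. t i *\<^sub>R a i))"
    by (intro continuous_intros continuous_on_subset[OF continuous_on_product_coordinates]) auto
  obtain t0 where "t0 \<in> S" and t0_min: "\<And>t. t \<in> S \<Longrightarrow>
      norm (\<Sum>i\<in>K. t0 i *\<^sub>R a i) \<le> norm (\<Sum>i\<in>K. t i *\<^sub>R a i)"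
    using continuous_attains_inf[OF compact nonempty cont] by blast
  define m where "m = norm (\<Sum>i\<in>K. t0 i *\<^sub>R a i)"
  have "m \<noteq> 0"
  proof
    assume "m = 0"
    then have "\<forall>i\<in>K. t0 i = 0"
      using independent_image_sum_eq_0[OF assms] unfolding m_def by auto
    with \<open>t0 \<in> S\<close> show False unfolding S_def by simp
  qed
  then have "m > 0" unfolding m_def by simp
  moreover have "m * (\<Sum>i\<in>K. \<bar>t i\<bar>) \<le> norm (\<Sum>i\<in>K. t i *\<^sub>R a i)" for t
  proof (cases "(\<Sum>i\<in>K. \<bar>t i\<bar>) = 0")
    case False
    define s where "s = (\<Sum>i\<in>K. \<bar>t i\<bar>)"
    then have "s > 0" using False by (simp add: sum_nonneg order_le_neq_trans)
    define t' where "t' = (\<lambda>i. if i \<in> K then t i / s else 0)"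
    have "\<bar>t i\<bar> \<le> s" if "i \<in> K" for i
      unfolding s_def using finK that by (intro member_le_sum) auto
    then have "t' \<in> PiE UNIV (\<lambda>i. if i \<in> K then {-1..1} else {0})"
      using \<open>s > 0\<close> by (force simp: t'_def abs_le_iff divide_simps)
    moreover have "(\<Sum>i\<in>K. \<bar>t' i\<bar>) = (\<Sum>i\<in>K. \<bar>t i\<bar>) / s"
      unfolding sum_divide_distrib t'_def using \<open>s > 0\<close> by (intro sum.cong) auto
    ultimately have "t' \<in> S"
      using \<open>s > 0\<close> unfolding S_def s_def by simp
    then have "m \<le> norm (\<Sum>i\<in>K. t' i *\<^sub>R a i)"
      unfolding m_def by (rule t0_min)
    also have "(\<Sum>i\<in>K. t' i *\<^sub>R a i) = (1 / s) *\<^sub>R (\<Sum>i\<in>K. t i *\<^sub>R a i)"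
      unfolding t'_def scaleR_sum_right by (intro sum.cong) auto
    finally show ?thesis
      using \<open>s > 0\<close> by (simp add: s_def[symmetric] field_simps)
  qed simp
  ultimately show ?thesis using that by blast
qed

lemma cone_gen_cone:
  fixes K :: "'i set"
  shows "cone (gen_cone K a)"
  unfolding cone_def gen_cone_def
proof (clarify)
  fix t :: "'i \<Rightarrow> real" and s :: real
  assume "\<forall>i\<in>K. 0 \<le> t i" "0 \<le> s"
  then show "\<exists>t'. s *\<^sub>R (\<Sum>i\<in>K. t i *\<^sub>R a i) = (\<Sum>i\<in>K. t' i *\<^sub>R a i) \<and> (\<forall>i\<in>K. 0 \<le> t' i)"
    by (intro exI[of _ "\<lambda>i. s * t i"]) (simp add: scaleR_sum_right)
qed

lemma nearest_point_cone_orthogonal: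
  assumes "cone S" "p \<in> S" and nearest: "\<forall>c\<in>S. dist v p \<le> dist v c"
  shows "inner (v - p) p = 0"
proof -
  have not_closer: "\<not> inner (v - p) (c *\<^sub>R p - p) > 0" if "c \<ge> 0" for c
  proof
    assume "inner (v - p) (c *\<^sub>R p - p) > 0"
    then obtain u where "u > 0" "u \<le> 1" "dist (p + u *\<^sub>R (c *\<^sub>R p - p)) v < dist p v"
      using closer_point_lemma by blast
    moreover have "p + u *\<^sub>R (c *\<^sub>R p - p) = (1 - u + u * c) *\<^sub>R p"
      by (simp add: algebra_simps)
    moreover have "(1 - u + u * c) *\<^sub>R p \<in> S"
      using assms(1,2) \<open>u > 0\<close> \<open>u \<le> 1\<close> \<open>c \<ge> 0\<close> by (simp add: cone_def)
    ultimately show False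
      using nearest by (fastforce simp: dist_commute)
  qed
  show ?thesis
    using not_closer[of 0] not_closer[of 2] by (simp add: algebra_simps)
qed

lemma gen_cone_nearest_point_exists:
  fixes a :: "'i \<Rightarrow> 'a::real_normed_vector"
  assumes "finite K" "inj_on a K" "independent (a ` K)"
  shows "\<exists>p\<in>gen_cone K a. \<forall>c\<in>gen_cone K a. dist v p \<le> dist v c"
proof -
  obtain m where "m > 0" and m: "\<And>t. m * (\<Sum>i\<in>K. \<bar>t i\<bar>) \<le> norm (\<Sum>i\<in>K. t i *\<^sub>R a i)"
    using independent_sum_coeffs_bound[OF assms] by blast
  define R where "R = 2 * norm v / m"
  define B where "B = PiE UNIV (\<lambda>i. if i \<in> K then {0..R} else {0::real})"
  have "R \<ge> 0" unfolding R_def using \<open>m > 0\<close> by simp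
  then have zero_in_B: "(\<lambda>_. 0) \<in> B" unfolding B_def by auto
  have "compact B" unfolding B_def by (rule compact_PiE_intervals)
  moreover have "B \<noteq> {}" using zero_in_B by auto
  moreover have "continuous_on B (\<lambda>t. dist v (\<Sum>i\<in>K. t i *\<^sub>R a i))"
    by (intro continuous_intros continuous_on_subset[OF continuous_on_product_coordinates]) auto
  ultimately obtain t0 where "t0 \<in> B" and t0_min: "\<And>t. t \<in> B \<Longrightarrow>
      dist v (\<Sum>i\<in>K. t0 i *\<^sub>R a i) \<le> dist v (\<Sum>i\<in>K. t i *\<^sub>R a i)"
    by (rule continuous_attains_inf[elim_format]) blast
  define p where "p = (\<Sum>i\<in>K. t0 i *\<^sub>R a i)"
  have "t0 i \<ge> 0" if "i \<in> K" for i
    using PiE_mem[OF \<open>t0 \<in> B\<close>[unfolded B_def], of i] that by simp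
  then have "p \<in> gen_cone K a"
    unfolding p_def gen_cone_def by blast
  moreover have "dist v p \<le> dist v c" if "c \<in> gen_cone K a" for c
  proof -
    obtain t where t: "c = (\<Sum>i\<in>K. t i *\<^sub>R a i)" "\<forall>i\<in>K. t i \<ge> 0"
      using \<open>c \<in> gen_cone K a\<close> unfolding gen_cone_def by blast
    define t' where "t' = (\<lambda>i. if i \<in> K then t i else 0)"
    have c_t': "c = (\<Sum>i\<in>K. t' i *\<^sub>R a i)" unfolding t t'_def by (intro sum.cong) auto
    show ?thesis
    proof (cases "\<forall>i\<in>K. t i \<le> R")
      case True
      then have "t' \<in> B" unfolding B_def t'_def using t by auto
      then show ?thesis using t0_min c_t' unfolding p_def by auto
    next
      case False
      then obtain i where "i \<in> K" "t i > R" by auto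
      \<comment> \<open>Then c is so long that even 0 is closer to v.\<close>
      have "t i \<le> (\<Sum>i\<in>K. \<bar>t i\<bar>)"
        using member_le_sum[OF \<open>i \<in> K\<close> _ assms(1), of "\<lambda>i. \<bar>t i\<bar>"] by simp
      then have "m * R < m * (\<Sum>i\<in>K. \<bar>t i\<bar>)"
        using \<open>m > 0\<close> \<open>t i > R\<close> by simp
      also have "\<dots> \<le> norm c" using m t(1) by simp
      finally have "2 * norm v < norm c"
        using \<open>m > 0\<close> by (simp add: R_def)
      then have "norm v < dist v c"
        using norm_triangle_ineq3[of c v] by (simp add: dist_norm norm_minus_commute)
      moreover have "dist v p \<le> dist v 0" using t0_min[OF zero_in_B] unfolding p_def by simp
      ultimately show ?thesis by simp
    qed
  qed
  ultimately show ?thesis by blast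
qed

lemma metric_proj_gen_cone:
  fixes a :: "'i \<Rightarrow> 'a::real_inner" and v :: 'a
  assumes "finite K" "inj_on a K" "independent (a ` K)"
  defines "p \<equiv> metric_proj (gen_cone K a) v"
  shows "p \<in> gen_cone K a" "inner (v - p) p = 0"
proof -
  have nearest: "p \<in> gen_cone K a" "\<forall>c\<in>gen_cone K a. dist v p \<le> dist v c"
    using someI_ex[OF gen_cone_nearest_point_exists[OF assms(1-3), of v, unfolded Bex_def]]
    unfolding p_def metric_proj_def by auto
  then show "p \<in> gen_cone K a" by simp
  show "inner (v - p) p = 0"
    using nearest_point_cone_orthogonal[OF cone_gen_cone nearest] .
qed

lemma LICQ_independent_IW:
  assumes "finite I"
    and LICQ: "\<forall>x\<in>feas I g. IA I g x \<noteq> {} \<longrightarrow>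
                 inj_on (\<lambda>i. g' i x) (IA I g x) \<and> independent ((\<lambda>i. g' i x) ` IA I g x)"
    and "u \<in> feas I g"
  shows "finite (IW I g g' J' u)" "inj_on (\<lambda>i. g' i u) (IW I g g' J' u)"
    "independent ((\<lambda>i. g' i u) ` IW I g g' J' u)"
proof -
  have IW_sub: "IW I g g' J' u \<subseteq> IA I g u" unfolding IW_def by auto
  moreover have "IA I g u \<subseteq> I" unfolding IA_def by auto
  ultimately show "finite (IW I g g' J' u)" using \<open>finite I\<close> by (auto intro: finite_subset)
  have "inj_on (\<lambda>i. g' i u) (IW I g g' J' u) \<and> independent ((\<lambda>i. g' i u) ` IW I g g' J' u)"
  proof (cases "IW I g g' J' u = {}")
    case False
    with IW_sub LICQ \<open>u \<in> feas I g\<close>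
    have "inj_on (\<lambda>i. g' i u) (IA I g u)" "independent ((\<lambda>i. g' i u) ` IA I g u)"
      by auto
    with IW_sub show ?thesis
      by (meson image_mono independent_mono inj_on_subset)
  qed (simp add: independent_empty)
  then show "inj_on (\<lambda>i. g' i u) (IW I g g' J' u)" "independent ((\<lambda>i. g' i u) ` IW I g g' J' u)"
    by auto
qed

lemma orthogonal_gen_cone:
  assumes "\<forall>i\<in>K. inner d (a i) = 0" "c \<in> gen_cone K a"
  shows "inner d c = 0"
  using assms unfolding gen_cone_def by (auto simp: inner_sum_right)

lemma orthogonal_span_singleton:
  assumes "x \<in> span {d}" "inner y d = 0"
  shows "inner x y = 0"
  using assms by (auto simp: span_singleton inner_commute)

lemma inner_eq_power2_norm:
  assumes "inner x (v - x) = 0"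
  shows "inner v x = (norm x)\<^sup>2"
  using assms by (simp add: inner_diff_right inner_commute power2_norm_eq_inner)

lemma Pythagoras_projection_on_line:
  assumes "x \<in> span {d}" "inner (v - x) d = 0" "inner (v - e) d = 0"
  shows "(norm e)\<^sup>2 = (norm x)\<^sup>2 + (norm (e - x))\<^sup>2"
proof -
  have "inner (e - x) d = 0"
    using assms(2,3) by (simp add: inner_diff_left)
  then have "orthogonal x (e - x)"
    unfolding orthogonal_def by (rule orthogonal_span_singleton[OF assms(1)])
  then show ?thesis using norm_add_Pythagorean[of x "e - x"] by simp
qed

lemma descent_comparison:
  fixes e x :: "'a::real_inner"
  assumes ge: "inner g e = - (norm e)\<^sup>2" and gx: "inner g x = - (norm x)\<^sup>2"
    and Pythagoras: "(norm e)\<^sup>2 = (norm x)\<^sup>2 + (norm (e - x))\<^sup>2"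
  shows "inner g e \<le> inner g x \<and> inner g x \<le> 0 \<and> norm x \<le> norm e
    \<and> (inner g e = inner g x \<longleftrightarrow> x = e) \<and> (norm x = norm e \<longleftrightarrow> x = e)
    \<and> (inner g x = 0 \<longleftrightarrow> x = 0)"
proof -
  have squares_le: "(norm x)\<^sup>2 \<le> (norm e)\<^sup>2"
    using Pythagoras zero_le_power2[of "norm (e - x)"] by linarith
  then have "norm x \<le> norm e"
    using power2_le_imp_le norm_ge_zero by blast
  moreover have "(norm x)\<^sup>2 = (norm e)\<^sup>2 \<longleftrightarrow> x = e"
    using Pythagoras by auto
  moreover have "norm x = norm e \<longleftrightarrow> (norm x)\<^sup>2 = (norm e)\<^sup>2"
    using power2_eq_iff_nonneg norm_ge_zero by blast
  moreover have "(norm x)\<^sup>2 = 0 \<longleftrightarrow> x = 0"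
    by simp
  ultimately show ?thesis
    using squares_le ge gx zero_le_power2[of "norm x"] by (smt (verit))
qed

theorem lemma7:
  fixes I :: "'i set"
    and J :: "'a::{real_inner,complete_space} \<Rightarrow> real"
    and J' :: "'a \<Rightarrow> 'a"
    and g :: "'i \<Rightarrow> 'a \<Rightarrow> real"
    and g' :: "'i \<Rightarrow> 'a \<Rightarrow> 'a"
    and u d du :: 'a
  assumes finI: "finite I"
    and J_C1: "\<forall>x. (J has_derivative (\<lambda>v. inner (J' x) v)) (at x)" "continuous_on UNIV J'"
    and g_C1: "\<forall>i\<in>I. (\<forall>x. (g i has_derivative (\<lambda>v. inner (g' i x) v)) (at x))
                        \<and> continuous_on UNIV (g' i)"
    and LICQ: "\<forall>x\<in>feas I g. IA I g x \<noteq> {} \<longrightarrow>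
                 inj_on (\<lambda>i. g' i x) (IA I g x) \<and> independent ((\<lambda>i. g' i x) ` IA I g x)"
    and u: "u \<in> feas I g"
    and d: "\<forall>i\<in>IW I g g' J' u. inner d (g' i u) = 0"
    and du_span: "du \<in> span {d}"
    and w_perp: "inner (- J' u - du) d = 0"
  shows "inner (J' u) (dW I g g' J' u) \<le> inner (J' u) du
         \<and> inner (J' u) du \<le> 0
         \<and> norm du \<le> norm (dW I g g' J' u)
         \<and> (inner (J' u) (dW I g g' J' u) = inner (J' u) du \<longleftrightarrow> du = dW I g g' J' u)
         \<and> (norm du = norm (dW I g g' J' u) \<longleftrightarrow> du = dW I g g' J' u)
         \<and> (inner (J' u) du = 0 \<longleftrightarrow> du = 0)"
proof -
  define a where "a = (\<lambda>i. g' i u)"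
  define K where "K = IW I g g' J' u"
  define v where "v = - J' u"
  define p where "p = metric_proj (gen_cone K a) v"
  note K_independent = LICQ_independent_IW[OF finI LICQ u, where J' = J', folded K_def a_def]
  note p_cone = metric_proj_gen_cone[OF K_independent, of v, folded p_def]
  have dW_eq: "dW I g g' J' u = v - p"
    unfolding dW_def p_def K_def a_def v_def ..
  have "inner v (v - p) = (norm (v - p))\<^sup>2"
    using p_cone(2) by (intro inner_eq_power2_norm) simp
  then have J'_dW: "inner (J' u) (v - p) = - (norm (v - p))\<^sup>2"
    by (simp add: v_def)
  have "inner v du = (norm du)\<^sup>2"
    using inner_eq_power2_norm orthogonal_span_singleton[OF du_span w_perp] v_def by blast
  then have J'_du: "inner (J' u) du = - (norm du)\<^sup>2"
    by (simp add: v_def)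
  have "inner d p = 0"
    using d p_cone(1) unfolding K_def a_def by (rule orthogonal_gen_cone)
  then have "inner (- J' u - (v - p)) d = 0"
    unfolding v_def by (simp add: inner_commute[of p d])
  then have "(norm (v - p))\<^sup>2 = (norm du)\<^sup>2 + (norm (v - p - du))\<^sup>2"
    by (rule Pythagoras_projection_on_line[OF du_span w_perp])
  then show ?thesis
    unfolding dW_eq by (rule descent_comparison[OF J'_dW J'_du])
qed

end
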